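(* Let $\Pi_n$ be a standard PARITY$_n$ program such that no rule $y\leftarrow B$ of $\Pi_n$ has $y\in var(B)$ and every rule body of $\Pi_n$ is consistent. Then there is an almost pure PARITY$_n$ program $\Pi_n'$ with $|\Pi_n'|\le|\Pi_n|$.
   Context: A rule element is one of $\top$, $\bot$, $x$, $not\ x$, $not\ not\ x$, where $x$ is a variable. A (canonical) rule is $H\leftarrow B$ with $H$ a variable or $\bot$ and $B$ a finite set of rule elements; a canonical program is a finite set of rules. For a body $B$, $var(B)=\{e\in B: e\text{ is a variable}\}$. For a set of variables $I$: $I\models\top$; $I\not\models\bot$; $I\models x$ iff $I\models not\ not\ x$ iff $x\in I$; $I\models not\ x$ iff $x\notin I$; $I\models B$ iff $I$ satisfies every element of $B$; $I$ is closed under $H\leftarrow B$ if $I\models B$ implies $I\models H$. The reduct $\Pi^I$ replaces $not\ not\ x$ by $\top$ if $x\in I$ else $\bot$, and $not\ x$ by $\top$ if $x\notin I$ else $\bot$; $I$ is an answer set of $\Pi$ if $I$ is the least set closed under all rules of $\Pi^I$; $Ans(\Pi)$ is the set of answer sets; $var(\Pi)$ the set of variables occurring in $\Pi$; $|\Pi|$ the number of rules. Strings $w\in\{0,1\}^n$ are identified with $\{x_i:w_i=1\}$; PARITY$_n$ is the set of strings in $\{0,1\}^n$ with an odd number of 1's; a PARITY$_n$ program is a canonical program $\Pi$ with $var(\Pi)=\{x_1,\dots,x_n\}$ and $Ans(\Pi)=$ PARITY$_n$. For a set $B$ of rule elements, $S(B)=\{I\subseteq\{x_1,\dots,x_n\}: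 I\models B\}$; $B$ is consistent if $S(B)\neq\emptyset$. $B$ covers a variable $x$ if $x\in B$, $not\ x\in B$ or $not\ not\ x\in B$; $B$ fully covers $\{x_1,\dots,x_n\}$ if it covers every $x_i$. A PARITY$_n$ program $\Pi$ is standard if for every rule $x\leftarrow B\in\Pi$ with head a variable $x$: whenever $S(B\cup\{x\})$ has exactly one element, $not\ not\ x\notin B$. For a program $\Pi$, $F^-(\Pi)$ is the set of rules $H\leftarrow B\in\Pi$ such that $B\cup\{H\}$ does not fully cover $\{x_1,\dots,x_n\}$ (when $H=\bot$, this means $B$ does not fully cover), and $F^+(\Pi)=\Pi\setminus F^-(\Pi)$. An almost pure PARITY$_n$ program is a standard PARITY$_n$ program in which no rule $y\leftarrow B$ has $y\in var(B)$, every rule body is consistent, and every rule $H\leftarrow B\in F^+(\Pi)$ satisfies $var(B)=\emptyset$. *)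

theory Defs
  imports Main
begin

text \<open>Variables are natural numbers; the variable x_i is represented by i.\<close>

datatype elem = Top | Bot | Pos nat | Neg nat | NNeg nat
  (* Top, Bot, x, not x, not not x *)

datatype hd = HVar nat | HBot

datatype rule = Rule (head: hd) (body: "elem set")

type_synonym program = "rule set"

definition canonical :: "program \<Rightarrow> bool" where
  "canonical P \<longleftrightarrow> finite P \<and> (\<forall>r\<in>P. finite (body r))"

definition bvar :: "elem set \<Rightarrow> nat set" where
  "bvar B = {x. Pos x \<in> B}"

fun evars :: "elem \<Rightarrow> nat set" where
  "evars (Pos x) = {x}" | "evars (Neg x) = {x}" | "evars (NNeg x) = {x}"
| "evars Top = {}" | "evars Bot = {}"

fun hvars :: "hd \<Rightarrow> nat set" where
  "hvars (HVar x) = {x}" | "hvars HBot = {}"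

definition pvar :: "program \<Rightarrow> nat set" where
  "pvar P = (\<Union>r\<in>P. hvars (head r) \<union> (\<Union>e\<in>body r. evars e))"

fun sat_elem :: "nat set \<Rightarrow> elem \<Rightarrow> bool" where
  "sat_elem I Top = True"
| "sat_elem I Bot = False"
| "sat_elem I (Pos x) = (x \<in> I)"
| "sat_elem I (NNeg x) = (x \<in> I)"
| "sat_elem I (Neg x) = (x \<notin> I)"

definition sat_body :: "nat set \<Rightarrow> elem set \<Rightarrow> bool" where
  "sat_body I B \<longleftrightarrow> (\<forall>e\<in>B. sat_elem I e)"

fun sat_head :: "nat set \<Rightarrow> hd \<Rightarrow> bool" where
  "sat_head I (HVar x) = (x \<in> I)" | "sat_head I HBot = False"

definition closed_under :: "nat set \<Rightarrow> rule \<Rightarrow> bool" where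
  "closed_under I r \<longleftrightarrow> (sat_body I (body r) \<longrightarrow> sat_head I (head r))"

fun red_elem :: "nat set \<Rightarrow> elem \<Rightarrow> elem" where
  "red_elem I (NNeg x) = (if x \<in> I then Top else Bot)"
| "red_elem I (Neg x) = (if x \<notin> I then Top else Bot)"
| "red_elem I e = e"

definition reduct :: "program \<Rightarrow> nat set \<Rightarrow> program" where
  "reduct P I = (\<lambda>r. Rule (head r) (red_elem I ` body r)) ` P"

definition answer_set :: "program \<Rightarrow> nat set \<Rightarrow> bool" where
  "answer_set P I \<longleftrightarrow>
     (\<forall>r\<in>reduct P I. closed_under I r) \<and>
     (\<forall>J. (\<forall>r\<in>reduct P I. closed_under J r) \<longrightarrow> I \<subseteq> J)"

definition Ans :: "program \<Rightarrow> nat set set" where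
  "Ans P = {I. answer_set P I}"

definition PARITY :: "nat \<Rightarrow> nat set set" where
  "PARITY n = {I. I \<subseteq> {1..n} \<and> odd (card I)}"

definition parity_program :: "nat \<Rightarrow> program \<Rightarrow> bool" where
  "parity_program n P \<longleftrightarrow> canonical P \<and> pvar P = {1..n} \<and> Ans P = PARITY n"

definition S :: "nat \<Rightarrow> elem set \<Rightarrow> nat set set" where
  "S n B = {I. I \<subseteq> {1..n} \<and> sat_body I B}"

definition consistent :: "nat \<Rightarrow> elem set \<Rightarrow> bool" where
  "consistent n B \<longleftrightarrow> S n B \<noteq> {}"

definition covers :: "elem set \<Rightarrow> nat \<Rightarrow> bool" where
  "covers B x \<longleftrightarrow> Pos x \<in> B \<or> Neg x \<in> B \<or> NNeg x \<in> B"

definition fully_covers :: "nat \<Rightarrow> elem set \<Rightarrow> bool" where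
  "fully_covers n B \<longleftrightarrow> (\<forall>i\<in>{1..n}. covers B i)"

definition standard :: "nat \<Rightarrow> program \<Rightarrow> bool" where
  "standard n P \<longleftrightarrow> parity_program n P \<and>
     (\<forall>x B. Rule (HVar x) B \<in> P \<longrightarrow> card (S n (insert (Pos x) B)) = 1 \<longrightarrow> NNeg x \<notin> B)"

text \<open>B \<union> {H} as a set of rule elements (H = bot contributes Bot).\<close>
fun head_elem :: "hd \<Rightarrow> elem" where
  "head_elem (HVar x) = Pos x" | "head_elem HBot = Bot"

definition Fminus :: "nat \<Rightarrow> program \<Rightarrow> program" where
  "Fminus n P = {r\<in>P. \<not> fully_covers n (insert (head_elem (head r)) (body r))}"

definition Fplus :: "nat \<Rightarrow> program \<Rightarrow> program" where
  "Fplus n P = P - Fminus n P"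

definition almost_pure :: "nat \<Rightarrow> program \<Rightarrow> bool" where
  "almost_pure n P \<longleftrightarrow> standard n P \<and>
     (\<forall>y B. Rule (HVar y) B \<in> P \<longrightarrow> y \<notin> bvar B) \<and>
     (\<forall>r\<in>P. consistent n (body r)) \<and>
     (\<forall>r\<in>Fplus n P. bvar (body r) = {})"

end

theory Submission
  imports Defs
begin

text \<open>Replace every positive atom x in the body of each fully covered rule by not not x.
  This does not change satisfaction of bodies, and for answer sets it only matters in
  the minimality test: in the reduct w.r.t. I the new body is at most weaker on subsets
  of I, so every answer set of the old program remains one. Conversely, a new answer set
  I that is not an old one must make the body B of some fully covered rule x \<leftarrow> B true,
  with x \<in> I. Since B and x determine I uniquely, standardness forbids not not x in B,
  and x is not a positive atom of B either, so x does not occur in B at all. Then I - {x}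
  also satisfies B; if I had even size, I - {x} would be an answer set violating the
  rule. So I has odd size, i.e. it is an answer set of the old program after all.\<close>

definition self_loop_free :: "program \<Rightarrow> bool" where
  "self_loop_free P \<longleftrightarrow> (\<forall>y B. Rule (HVar y) B \<in> P \<longrightarrow> y \<notin> bvar B)"

fun nneg_of_pos :: "elem \<Rightarrow> elem" where
  "nneg_of_pos (Pos y) = NNeg y"
| "nneg_of_pos e = e"

definition purify_rule :: "nat \<Rightarrow> rule \<Rightarrow> rule" where
  "purify_rule n r =
     (if fully_covers n (insert (head_elem (head r)) (body r))
      then Rule (head r) (nneg_of_pos ` body r) else r)"

definition purify :: "nat \<Rightarrow> program \<Rightarrow> program" where
  "purify n P = purify_rule n ` P"

definition reduct_closed :: "program \<Rightarrow> nat set \<Rightarrow> nat set \<Rightarrow> bool" where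
  "reduct_closed P I J \<longleftrightarrow>
     (\<forall>r\<in>P. sat_body J (red_elem I ` body r) \<longrightarrow> sat_head J (head r))"

lemma answer_set_iff_reduct_closed:
  "answer_set P I \<longleftrightarrow> reduct_closed P I I \<and> (\<forall>J. reduct_closed P I J \<longrightarrow> I \<subseteq> J)"
proof -
  have "(\<forall>r\<in>reduct P I. closed_under J r) = reduct_closed P I J" for J
    by (auto simp: reduct_def closed_under_def reduct_closed_def)
  then show ?thesis by (simp add: answer_set_def)
qed

lemma sat_body_insert: "sat_body I (insert e B) \<longleftrightarrow> sat_elem I e \<and> sat_body I B"
  by (simp add: sat_body_def)

lemma sat_body_red_elem_self: "sat_body I (red_elem I ` B) \<longleftrightarrow> sat_body I B"
proof -
  have "sat_elem I (red_elem I e) = sat_elem I e" for e by (cases e) auto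
  then show ?thesis by (simp add: sat_body_def)
qed

lemma sat_body_red_elem_mono:
  assumes "sat_body J (red_elem I ` B)" and "J \<subseteq> K"
  shows "sat_body K (red_elem I ` B)"
proof -
  have "sat_elem J (red_elem I e) \<Longrightarrow> sat_elem K (red_elem I e)" for e
    using assms(2) by (cases e) (auto split: if_splits)
  then show ?thesis using assms(1) by (auto simp: sat_body_def)
qed

lemma reduct_closed_Int:
  assumes "reduct_closed P I I" and "reduct_closed P I J"
  shows "reduct_closed P I (J \<inter> I)"
  unfolding reduct_closed_def
proof (intro ballI impI)
  fix r assume r: "r \<in> P" and s: "sat_body (J \<inter> I) (red_elem I ` body r)"
  have "sat_head J (head r)" "sat_head I (head r)"
    using assms r sat_body_red_elem_mono[OF s] by (auto simp: reduct_closed_def)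
  then show "sat_head (J \<inter> I) (head r)" by (cases "head r") auto
qed

lemma answer_set_subset_pvar:
  assumes "answer_set P I"
  shows "I \<subseteq> pvar P"
proof -
  have closed: "reduct_closed P I I" and minimal: "\<And>J. reduct_closed P I J \<Longrightarrow> I \<subseteq> J"
    using assms answer_set_iff_reduct_closed by auto
  have "reduct_closed P I (I \<inter> pvar P)"
    unfolding reduct_closed_def
  proof (intro ballI impI)
    fix r assume r: "r \<in> P" and s: "sat_body (I \<inter> pvar P) (red_elem I ` body r)"
    then have "sat_head I (head r)"
      using closed sat_body_red_elem_mono[OF s] by (auto simp: reduct_closed_def)
    moreover have "hvars (head r) \<subseteq> pvar P" using r by (auto simp: pvar_def)
    ultimately show "sat_head (I \<inter> pvar P) (head r)" by (cases "head r") auto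
  qed
  then show ?thesis using minimal by blast
qed

lemma sat_body_nneg_of_pos [simp]: "sat_body I (nneg_of_pos ` B) \<longleftrightarrow> sat_body I B"
proof -
  have "sat_elem I (nneg_of_pos e) = sat_elem I e" for e by (cases e) auto
  then show ?thesis by (simp add: sat_body_def)
qed

lemma nneg_of_pos_eq_iff [simp]:
  "Pos i = nneg_of_pos e \<longleftrightarrow> False"
  "Neg i = nneg_of_pos e \<longleftrightarrow> e = Neg i"
  "NNeg i = nneg_of_pos e \<longleftrightarrow> e = Pos i \<or> e = NNeg i"
  by (cases e; auto)+

lemma Pos_notin_nneg_of_pos [simp]: "Pos y \<notin> nneg_of_pos ` B"
  by (auto simp: image_iff)

lemma fully_covers_nneg_of_pos [simp]:
  "fully_covers n (insert h (nneg_of_pos ` B)) \<longleftrightarrow> fully_covers n (insert h B)"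
proof -
  have "covers (insert h (nneg_of_pos ` B)) i \<longleftrightarrow> covers (insert h B) i" for i
    unfolding covers_def by (auto simp: image_iff)
  then show ?thesis by (simp add: fully_covers_def)
qed

lemma head_purify_rule [simp]: "head (purify_rule n r) = head r"
  by (simp add: purify_rule_def)

lemma sat_body_purify_rule [simp]: "sat_body I (body (purify_rule n r)) \<longleftrightarrow> sat_body I (body r)"
  by (simp add: purify_rule_def)

lemma S_purify_rule [simp]: "S n (insert e (body (purify_rule m r))) = S n (insert e (body r))"
  by (simp add: S_def sat_body_insert)

lemma evars_purify_rule [simp]:
  "(\<Union>e\<in>body (purify_rule n r). evars e) = (\<Union>e\<in>body r. evars e)"
proof -
  have "evars (nneg_of_pos e) = evars e" for e by (cases e) auto
  then show ?thesis by (simp add: purify_rule_def)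
qed

lemma pvar_purify [simp]: "pvar (purify n P) = pvar P"
  by (simp add: pvar_def purify_def)

lemma NNeg_in_body_purify_rule:
  "NNeg x \<in> body (purify_rule n r) \<Longrightarrow> NNeg x \<in> body r \<or> Pos x \<in> body r"
  by (auto simp: purify_rule_def image_iff split: if_splits)

lemma bvar_body_purify_rule: "bvar (body (purify_rule n r)) \<subseteq> bvar (body r)"
  by (auto simp: purify_rule_def bvar_def)

lemma Rule_in_purifyE:
  assumes "Rule h B \<in> purify n P"
  obtains B0 where "Rule h B0 \<in> P" and "B = body (purify_rule n (Rule h B0))"
proof -
  from assms obtain r where r: "r \<in> P" and eq: "Rule h B = purify_rule n r"
    by (auto simp: purify_def)
  obtain h' B0 where r_eq: "r = Rule h' B0" by (cases r)
  have "h = h'" using arg_cong[OF eq, of head] r_eq by simp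
  moreover have "B = body (purify_rule n r)" using arg_cong[OF eq, of body] by simp
  ultimately show ?thesis using that r r_eq by blast
qed

lemma answer_set_purify:
  assumes "answer_set P I"
  shows "answer_set (purify n P) I"
proof -
  have closed: "reduct_closed P I I" and minimal: "\<And>J. reduct_closed P I J \<Longrightarrow> I \<subseteq> J"
    using assms answer_set_iff_reduct_closed by auto
  have weaker: "sat_body J (red_elem I ` body (purify_rule n r))"
    if "J \<subseteq> I" and "sat_body J (red_elem I ` body r)" for J r
  proof -
    have "sat_elem J (red_elem I e) \<Longrightarrow> sat_elem J (red_elem I (nneg_of_pos e))" for e
      using \<open>J \<subseteq> I\<close> by (cases e) auto
    then show ?thesis using that(2) by (auto simp: purify_rule_def sat_body_def)
  qed
  have "reduct_closed (purify n P) I I"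
    using closed by (simp add: reduct_closed_def purify_def sat_body_red_elem_self)
  moreover have "I \<subseteq> J" if "reduct_closed (purify n P) I J" for J
  proof -
    have "reduct_closed P I (J \<inter> I)"
      unfolding reduct_closed_def
    proof (intro ballI impI)
      fix r assume r: "r \<in> P" and s: "sat_body (J \<inter> I) (red_elem I ` body r)"
      have "sat_body J (red_elem I ` body (purify_rule n r))"
        using weaker[OF _ s] sat_body_red_elem_mono by blast
      with that r have "sat_head J (head r)" by (auto simp: reduct_closed_def purify_def)
      moreover have "sat_head I (head r)"
        using closed r sat_body_red_elem_mono[OF s] by (auto simp: reduct_closed_def)
      ultimately show "sat_head (J \<inter> I) (head r)" by (cases "head r") auto
    qed
    then show ?thesis using minimal by blast
  qed
  ultimately show ?thesis using answer_set_iff_reduct_closed by blast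
qed

lemma S_eq_singleton_if_fully_covers:
  assumes "fully_covers n (insert (Pos x) B)" and "I \<subseteq> {1..n}" and "x \<in> I"
    and "sat_body I B"
  shows "S n (insert (Pos x) B) = {I}"
proof -
  have unique: "K = I" if K: "K \<subseteq> {1..n}" "x \<in> K" "sat_body K B" for K
  proof -
    have agree: "i \<in> K \<longleftrightarrow> i \<in> I" if "i \<in> {1..n}" "i \<noteq> x" for i
    proof -
      have "covers B i" using assms(1) that unfolding fully_covers_def covers_def by auto
      then show ?thesis using K(3) assms(4) by (force simp: covers_def sat_body_def)
    qed
    have "i \<in> K \<longleftrightarrow> i \<in> I" for i
      using agree[of i] K(1,2) assms(2,3) by (cases "i \<in> {1..n}"; cases "i = x") auto
    then show ?thesis by blast
  qed
  show ?thesis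
  proof (intro set_eqI iffI)
    fix K assume "K \<in> S n (insert (Pos x) B)"
    then have "K \<subseteq> {1..n}" "x \<in> K" "sat_body K B" by (simp_all add: S_def sat_body_insert)
    then show "K \<in> {I}" using unique by blast
  next
    fix K assume "K \<in> {I}"
    then show "K \<in> S n (insert (Pos x) B)" using assms(2-4) by (simp add: S_def sat_body_insert)
  qed
qed

lemma odd_card_if_fully_covered_body:
  assumes std: "standard n P" and "self_loop_free P"
    and r: "Rule (HVar x) B \<in> P" and fc: "fully_covers n (insert (Pos x) B)"
    and I: "I \<subseteq> {1..n}" "x \<in> I" "sat_body I B"
  shows "odd (card I)"
proof (rule ccontr)
  assume "\<not> odd (card I)"
  have "card (S n (insert (Pos x) B)) = 1"
    using S_eq_singleton_if_fully_covers[OF fc I] by simp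
  then have "NNeg x \<notin> B" using std r by (auto simp: standard_def)
  moreover have "Pos x \<notin> B" using \<open>self_loop_free P\<close> r by (auto simp: self_loop_free_def bvar_def)
  moreover have "Neg x \<notin> B" using I by (auto simp: sat_body_def)
  ultimately have fresh: "x \<notin> evars e" if "e \<in> B" for e using that by (cases e) auto
  have "sat_elem (I - {x}) e" if "e \<in> B" for e
    using fresh[OF that] that I(3) by (cases e) (auto simp: sat_body_def)
  then have sat: "sat_body (I - {x}) (red_elem (I - {x}) ` B)"
    by (simp add: sat_body_red_elem_self) (simp add: sat_body_def)
  have "finite I" using I(1) finite_subset by blast
  then have "odd (card (I - {x}))"
    using I(2) \<open>\<not> odd (card I)\<close> card_gt_0_iff by fastforce
  then have "answer_set P (I - {x})"
    using std I(1) by (auto simp: standard_def parity_program_def Ans_def PARITY_def)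
  then have "sat_head (I - {x}) (HVar x)"
    using r sat by (force simp: answer_set_iff_reduct_closed reduct_closed_def)
  then show False by simp
qed

lemma answer_set_of_purify:
  assumes std: "standard n P" and "self_loop_free P"
    and a: "answer_set (purify n P) I"
  shows "answer_set P I"
proof (rule ccontr)
  assume not_ans: "\<not> answer_set P I"
  have Ans: "Ans P = PARITY n" and pvar: "pvar P = {1..n}"
    using std by (auto simp: standard_def parity_program_def)
  have I: "I \<subseteq> {1..n}" using answer_set_subset_pvar[OF a] pvar by simp
  have closed': "reduct_closed (purify n P) I I"
    and minimal': "\<And>J. reduct_closed (purify n P) I J \<Longrightarrow> I \<subseteq> J"
    using a answer_set_iff_reduct_closed by auto
  have closed: "reduct_closed P I I"
    using closed' by (simp add: reduct_closed_def purify_def sat_body_red_elem_self)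
  then obtain J where "reduct_closed P I J" and "\<not> I \<subseteq> J"
    using not_ans answer_set_iff_reduct_closed by blast
  then have J: "reduct_closed P I (J \<inter> I)" and "\<not> reduct_closed (purify n P) I (J \<inter> I)"
    using reduct_closed_Int[OF closed] minimal' by blast+
  then obtain r where r: "r \<in> P" and s: "sat_body (J \<inter> I) (red_elem I ` body (purify_rule n r))"
    and violated: "\<not> sat_head (J \<inter> I) (head r)"
    by (auto simp: reduct_closed_def purify_def)
  have fc: "fully_covers n (insert (head_elem (head r)) (body r))"
    using J r s violated by (auto simp: reduct_closed_def purify_rule_def split: if_splits)
  have "sat_body I (red_elem I ` body (purify_rule n r))"
    using s sat_body_red_elem_mono by blast
  then have satI: "sat_body I (body r)" and "sat_head I (head r)"
    using closed' r by (auto simp: sat_body_red_elem_self reduct_closed_def purify_def)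
  then obtain x where x: "head r = HVar x" "x \<in> I" by (cases "head r") auto
  then have "Rule (HVar x) (body r) \<in> P" using r by (metis rule.collapse)
  then have "odd (card I)"
    using odd_card_if_fully_covered_body[OF std \<open>self_loop_free P\<close>] fc x I satI by simp
  then show False using not_ans I Ans by (auto simp: Ans_def PARITY_def)
qed

lemma parity_program_purify:
  assumes "standard n P" and "self_loop_free P"
  shows "parity_program n (purify n P)"
proof -
  have "Ans (purify n P) = Ans P"
    using answer_set_purify answer_set_of_purify[OF assms] by (auto simp: Ans_def)
  moreover have "canonical (purify n P)"
    using assms(1) by (auto simp: standard_def parity_program_def canonical_def purify_def
        purify_rule_def)
  ultimately show ?thesis using assms(1) by (simp add: standard_def parity_program_def)
qed

lemma self_loop_free_purify:
  assumes "self_loop_free P"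
  shows "self_loop_free (purify n P)"
  unfolding self_loop_free_def
proof (intro allI impI)
  fix y B assume "Rule (HVar y) B \<in> purify n P"
  then obtain B0 where "Rule (HVar y) B0 \<in> P" and "B = body (purify_rule n (Rule (HVar y) B0))"
    by (rule Rule_in_purifyE)
  then show "y \<notin> bvar B"
    using assms bvar_body_purify_rule by (fastforce simp: self_loop_free_def)
qed

lemma standard_purify:
  assumes std: "standard n P" and "self_loop_free P"
  shows "standard n (purify n P)"
  unfolding standard_def
proof (intro conjI parity_program_purify[OF assms] allI impI)
  fix x B assume rule: "Rule (HVar x) B \<in> purify n P" and one: "card (S n (insert (Pos x) B)) = 1"
  from rule obtain B0 where r: "Rule (HVar x) B0 \<in> P" and B: "B = body (purify_rule n (Rule (HVar x) B0))"
    by (rule Rule_in_purifyE)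
  have "NNeg x \<notin> B0" using std r one B by (simp add: standard_def)
  moreover have "Pos x \<notin> B0" using \<open>self_loop_free P\<close> r by (auto simp: self_loop_free_def bvar_def)
  ultimately show "NNeg x \<notin> B" using B NNeg_in_body_purify_rule by fastforce
qed

lemma almost_pure_purify:
  assumes "standard n P" and "self_loop_free P" and "\<forall>r\<in>P. consistent n (body r)"
  shows "almost_pure n (purify n P)"
proof -
  have "consistent n (body (purify_rule n r)) \<longleftrightarrow> consistent n (body r)" for r
    by (simp add: consistent_def S_def)
  then have "\<forall>r\<in>purify n P. consistent n (body r)"
    using assms(3) by (simp add: purify_def)
  moreover have "\<forall>r\<in>Fplus n (purify n P). bvar (body r) = {}"
    by (auto simp: Fplus_def Fminus_def purify_def purify_rule_def bvar_def)
  ultimately show ?thesis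
    using standard_purify[OF assms(1,2)] self_loop_free_purify[OF assms(2)]
    by (simp add: almost_pure_def self_loop_free_def)
qed

theorem mainTheorem16:
  fixes n :: nat and P :: program
  assumes "standard n P"
    and "\<forall>y B. Rule (HVar y) B \<in> P \<longrightarrow> y \<notin> bvar B"
    and "\<forall>r\<in>P. consistent n (body r)"
  shows "\<exists>P'. almost_pure n P' \<and> card P' \<le> card P"
proof (intro exI conjI)
  show "almost_pure n (purify n P)"
    using almost_pure_purify assms by (simp add: self_loop_free_def)
  have "finite P" using assms(1) by (simp add: standard_def parity_program_def canonical_def)
  then show "card (purify n P) \<le> card P" by (simp add: purify_def card_image_le)
qed

end
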